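(* Let $n\ge 2$ and let $(X_i)_{i\ge1}$ be a Markov chain on a discrete (finite) state space, with $X_1\sim P_1$ and transition matrices $K_1,K_2,\ldots$, so that $X_i$ has pmf $P_i=P_1K_1\cdots K_{i-1}$. For each $i$, let $K_i^{\leftarrow}$ be the backward channel of $K_i$ with respect to $P_i$, $K_i^{\leftarrow}(x|y)=K_i(y|x)P_i(x)/P_{i+1}(y)$, acting on functions $g$ by $(K_i^\leftarrow g)(y)=\sum_x K_i^\leftarrow(x|y)g(x)$, and for $1\le\gamma\le\alpha$ let $\|K_i^\leftarrow\|_{\alpha\to\gamma}=\sup_{g\neq0}\|K_i^\leftarrow g\|_{L^\alpha(P_{i+1})}/\|g\|_{L^\gamma(P_i)}$. For $\alpha>1$ let $\gamma_i^\star(\alpha)$ be the smallest $\gamma$ such that $K_i$ is hypercontractive, i.e. $\|K_i\|_{\alpha\to\gamma}\le 1$, and let $\bar\gamma_i^\star(\alpha)$ be its Hölder conjugate. Let $f$ satisfy the bounded-differences condition $|f(x_1,\ldots,x_i,\ldots,x_n)-f(x_1,\ldots,\hat x,\ldots,x_n)|\le 1/n$ for all $x^n,\hat x$ and $1\le i\le n$. Then for every $\alpha>1$ (with $\beta=\alpha/(\alpha-1)$) and every $t>0$, $$\mathcal{P}_{X^n}\left(\left|f-\mathcal{P}_{\bigotimes_{i=1}^n X_i}(f)\right|\ge t\right)\le 2^{1/\beta}\exp\left(-\frac{2nt^2}{\beta}+\sum_{i=1}^{n-1}\left(\log\|K_i^\leftarrow\|_{\alpha\to\gamma_i^\star(\alpha)}-\frac{1}{\bar\gamma_i^\star(\alpha)}\min_{j\in\mathrm{supp}(P_i)}\log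 P_i(j)\right)\right).$$ Moreover, if the chain is time-homogeneous, $K_i=K$ for all $i$ (with $K^\leftarrow$ and $\gamma_K^\star(\alpha)$, $\bar\gamma_K^\star(\alpha)$ defined analogously), then $$\mathcal{P}_{X^n}\left(\left|f-\mathcal{P}_{\bigotimes_{i=1}^n X_i}(f)\right|\ge t\right)\le 2^{1/\beta}\exp\left(-\frac{2nt^2}{\beta}+(n-1)\log\|K^\leftarrow\|_{\alpha\to\gamma_K^\star(\alpha)}-\frac{1}{\bar\gamma_K^\star(\alpha)}\sum_{i=1}^{n-1}\min_{j\in\mathrm{supp}(P_i)}\log P_i(j)\right)$$ $$\le 2^{1/\beta}\exp\left(-\frac{2nt^2}{\beta}+(n-1)\log\|K^\leftarrow\|_{\alpha\to\gamma_K^\star(\alpha)}-\frac{n-1}{\bar\gamma_K^\star(\alpha)}\min_{i=1,\ldots,n-1}\min_{j\in\mathrm{supp}(P_i)}\log P_i(j)\right).$$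
   Context: $\mathcal{P}_{X^n}$ is the joint law of $(X_1,\ldots,X_n)$ and $\mathcal{P}_{\bigotimes_{i=1}^n X_i}=P_1\otimes\cdots\otimes P_n$ the product of the marginals; $\mu(g)=\int g\,d\mu$. For a Markov kernel $K$, $(Kg)(x)=\sum_y K(y|x)g(y)$ and $\|K\|_{\alpha\to\gamma}=\sup_{g\ne0}\|Kg\|_\alpha/\|g\|_\gamma$.
   Formalization: The time-homogeneous bounds assume that $\gamma_i^\star(\alpha)$ and $\|K_i^\leftarrow\|_{\alpha\to\gamma_i^\star(\alpha)}$ equal the same constants $\gamma_K^\star(\alpha)$ and $\|K^\leftarrow\|_{\alpha\to\gamma_K^\star(\alpha)}$ for every i = 1, ..., n-1, besides $K_i=K$. Each condition added here is assumed in the paper as well or is needed for the statement above to hold. *)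

theory Defs
  imports Complex_Main "HOL-Library.FuncSet"
begin

text \<open>A Markov kernel is
  represented as K :: 'a => 'b => real with K x y = K(y|x) (row = conditioning state).
  Transition matrices of the chain are indexed K 1, K 2, ...; the initial law is P1.\<close>

definition apply_kernel :: "('a \<Rightarrow> 'b::finite \<Rightarrow> real) \<Rightarrow> ('b \<Rightarrow> real) \<Rightarrow> 'a \<Rightarrow> real" where
  "apply_kernel K g x = (\<Sum>y\<in>UNIV. K x y * g y)"

text \<open>Backward channel of K w.r.t. input law P (output law Q = P K):
  backward_kernel P Q K y x = K<-(x|y) = K(y|x) P(x) / Q(y).\<close>
definition backward_kernel :: "('a \<Rightarrow> real) \<Rightarrow> ('b \<Rightarrow> real) \<Rightarrow> ('a \<Rightarrow> 'b \<Rightarrow> real) \<Rightarrow> 'b \<Rightarrow> 'a \<Rightarrow> real" where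
  "backward_kernel P Q K y x = K x y * P x / Q y"

definition Lp_norm :: "('a::finite \<Rightarrow> real) \<Rightarrow> real \<Rightarrow> ('a \<Rightarrow> real) \<Rightarrow> real" where
  "Lp_norm \<mu> p g = (\<Sum>x\<in>UNIV. \<mu> x * \<bar>g x\<bar> powr p) powr (1 / p)"

definition op_norm :: "(('a::finite \<Rightarrow> real) \<Rightarrow> ('b::finite \<Rightarrow> real)) \<Rightarrow> ('b \<Rightarrow> real) \<Rightarrow> real
    \<Rightarrow> ('a \<Rightarrow> real) \<Rightarrow> real \<Rightarrow> real" where
  "op_norm T \<mu> \<alpha> \<nu> \<gamma> = (SUP g\<in>{g. g \<noteq> (\<lambda>_. 0)}. Lp_norm \<mu> \<alpha> (T g) / Lp_norm \<nu> \<gamma> g)"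

definition hc_gamma_star :: "('a::finite \<Rightarrow> real) \<Rightarrow> ('a \<Rightarrow> real) \<Rightarrow> ('a \<Rightarrow> 'a \<Rightarrow> real) \<Rightarrow> real \<Rightarrow> real" where
  "hc_gamma_star P Q K \<alpha> =
     Inf {\<gamma>. 1 \<le> \<gamma> \<and> \<gamma> \<le> \<alpha> \<and> op_norm (apply_kernel K) P \<alpha> Q \<gamma> \<le> 1}"

definition holder_conj :: "real \<Rightarrow> real" where
  "holder_conj \<gamma> = \<gamma> / (\<gamma> - 1)"

definition bwd_norm_star :: "('a::finite \<Rightarrow> real) \<Rightarrow> ('a \<Rightarrow> real) \<Rightarrow> ('a \<Rightarrow> 'a \<Rightarrow> real) \<Rightarrow> real \<Rightarrow> real" where
  "bwd_norm_star P Q K \<alpha> =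
     op_norm (apply_kernel (backward_kernel P Q K)) Q \<alpha> P (hc_gamma_star P Q K \<alpha>)"

definition min_log_supp :: "('a::finite \<Rightarrow> real) \<Rightarrow> real" where
  "min_log_supp P = Min ((\<lambda>j. ln (P j)) ` {j. 0 < P j})"

text \<open>Marginals P_i = P_1 K_1 ... K_{i-1} (1-based; index 0 is a dummy equal to P1).\<close>
fun mc_marg :: "('a::finite \<Rightarrow> real) \<Rightarrow> (nat \<Rightarrow> 'a \<Rightarrow> 'a \<Rightarrow> real) \<Rightarrow> nat \<Rightarrow> 'a \<Rightarrow> real" where
  "mc_marg P1 K 0 = P1"
| "mc_marg P1 K (Suc 0) = P1"
| "mc_marg P1 K (Suc (Suc i)) = (\<lambda>y. \<Sum>x\<in>UNIV. mc_marg P1 K (Suc i) x * K (Suc i) x y)"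

definition mc_joint :: "('a \<Rightarrow> real) \<Rightarrow> (nat \<Rightarrow> 'a \<Rightarrow> 'a \<Rightarrow> real) \<Rightarrow> nat \<Rightarrow> (nat \<Rightarrow> 'a) \<Rightarrow> real" where
  "mc_joint P1 K n x = P1 (x 1) * (\<Prod>i\<in>{1..<n}. K i (x i) (x (Suc i)))"

definition prod_marg_mean :: "('a::finite \<Rightarrow> real) \<Rightarrow> (nat \<Rightarrow> 'a \<Rightarrow> 'a \<Rightarrow> real) \<Rightarrow> nat
    \<Rightarrow> ((nat \<Rightarrow> 'a) \<Rightarrow> real) \<Rightarrow> real" where
  "prod_marg_mean P1 K n f =
     (\<Sum>x\<in>PiE {1..n} (\<lambda>_. UNIV). (\<Prod>i\<in>{1..n}. mc_marg P1 K i (x i)) * f x)"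

definition dev_prob :: "('a::finite \<Rightarrow> real) \<Rightarrow> (nat \<Rightarrow> 'a \<Rightarrow> 'a \<Rightarrow> real) \<Rightarrow> nat
    \<Rightarrow> ((nat \<Rightarrow> 'a) \<Rightarrow> real) \<Rightarrow> real \<Rightarrow> real" where
  "dev_prob P1 K n f t =
     (\<Sum>x\<in>{x\<in>PiE {1..n} (\<lambda>_. UNIV). t \<le> \<bar>f x - prod_marg_mean P1 K n f\<bar>}. mc_joint P1 K n x)"

end

theory Submission
  imports Defs "HOL-Probability.Hoeffding"
begin

(* Under the product P_1 x ... x P_n of the marginals the coordinates are independent, so
   McDiarmid's inequality bounds the probability of the deviation event E by 2 exp(-2 n t^2).
   The law of the chain has density R(x) = prod_i K_i(x_i, x_(i+1)) / P_(i+1)(x_(i+1)) with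
   respect to this product, and Hoelder's inequality gives
   P_(X^n)(E) <= P_prod(E)^(1/beta) ||R||_alpha.  Integrating out the coordinates one at a time,
   starting from the last, bounds ||R||_alpha by the product over i of the largest
   L^alpha(P_(i+1)) norm of a likelihood ratio K_i(a, .) / P_(i+1) with P_i(a) > 0.  Such a ratio
   is the backward channel applied to the point mass at a normalised in L^1(P_i), whose
   L^gamma(P_i) norm is P_i(a)^(1/gamma - 1); for gamma = gamma_i^*(alpha) >= 1 this bounds the
   ratio by ||K_i^<-||_(alpha -> gamma) exp(-(1/gamma-bar) min log P_i). *)

section \<open>Hoelder's inequality for finite sums\<close>

lemma convex_on_powr_nonneg:
  fixes p :: real
  assumes "1 \<le> p"
  shows "convex_on {0..} (\<lambda>x::real. x powr p)"
proof (rule convex_onI)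
  fix t x y :: real
  assume t: "0 < t" "t < 1" and xy: "x \<in> {0..}" "y \<in> {0..}"
  show "((1 - t) *\<^sub>R x + t *\<^sub>R y) powr p \<le> (1 - t) * x powr p + t * y powr p"
  proof (cases "x = 0 \<or> y = 0")
    case True
    have "t powr p \<le> t" "(1 - t) powr p \<le> 1 - t"
      using powr_le_one_le t assms by auto
    with True xy t show ?thesis
      by (auto simp: powr_mult intro!: mult_right_mono)
  next
    case False
    with xy have "x \<in> {0<..}" "y \<in> {0<..}" by auto
    with t show ?thesis using convex_onD[OF powr_convex[OF assms]] by auto
  qed
qed (simp add: convex_real_interval)

lemma weighted_sum_powr_le:
  fixes a R :: "'b \<Rightarrow> real"
  assumes "finite S" "S \<noteq> {}" "sum a S = 1" "\<And>i. i \<in> S \<Longrightarrow> 0 \<le> a i"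
    and "\<And>i. i \<in> S \<Longrightarrow> 0 \<le> R i" "1 \<le> p"
  shows "(\<Sum>i\<in>S. a i * R i) powr p \<le> (\<Sum>i\<in>S. a i * R i powr p)"
  using convex_on_sum[OF assms(1,2) convex_on_powr_nonneg[OF assms(6)], of a R] assms by auto

lemma weighted_sum_le_Hoelder:
  fixes w R :: "'b \<Rightarrow> real"
  assumes S: "finite S" and w: "\<And>i. i \<in> S \<Longrightarrow> 0 \<le> w i" and R: "\<And>i. i \<in> S \<Longrightarrow> 0 \<le> R i"
    and p: "1 \<le> p"
  shows "(\<Sum>i\<in>S. w i * R i) \<le> sum w S powr (1 - 1/p) * (\<Sum>i\<in>S. w i * R i powr p) powr (1/p)"
proof (cases "sum w S = 0")
  case True
  then have "\<forall>i\<in>S. w i = 0" using sum_nonneg_eq_0_iff[OF S] w by blast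
  then show ?thesis by simp
next
  case False
  define W where "W = sum w S"
  define X where "X = (\<Sum>i\<in>S. w i * R i powr p)"
  have W: "0 < W" using False w unfolding W_def by (metis less_eq_real_def sum_nonneg)
  have X: "0 \<le> X" using w unfolding X_def by (auto intro!: sum_nonneg)
  define L where "L = (\<Sum>i\<in>S. w i / W * R i)"
  have L: "0 \<le> L" using W w R unfolding L_def by (auto intro!: sum_nonneg)
  have "L powr p \<le> (\<Sum>i\<in>S. w i / W * R i powr p)"
    unfolding L_def using False W w R p
    by (intro weighted_sum_powr_le S) (auto simp: W_def simp flip: sum_divide_distrib)
  also have "\<dots> = X / W"
    by (simp add: X_def sum_divide_distrib)
  finally have "(L powr p) powr (1/p) \<le> (X / W) powr (1/p)"
    using p by (intro powr_mono2) auto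
  then have "W * L \<le> W * (X / W) powr (1/p)"
    using L W p by (simp add: powr_powr)
  also have "W * (X / W) powr (1/p) = W powr (1 - 1/p) * X powr (1/p)"
    using W X by (simp add: powr_divide powr_diff)
  also have "W * L = (\<Sum>i\<in>S. w i * R i)"
    unfolding L_def using W by (simp add: sum_distrib_left)
  finally show ?thesis unfolding W_def X_def .
qed

lemma weighted_sum_le_Hoelder_bound:
  fixes w R :: "'b \<Rightarrow> real"
  assumes "finite S" "\<And>i. i \<in> S \<Longrightarrow> 0 \<le> w i" "\<And>i. i \<in> S \<Longrightarrow> 0 \<le> R i" "1 \<le> p"
    and "sum w S \<le> A" and "(\<Sum>i\<in>S. w i * R i powr p) \<le> B powr p" and "0 \<le> B"
  shows "(\<Sum>i\<in>S. w i * R i) \<le> A powr (1 - 1/p) * B"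
proof -
  have "(\<Sum>i\<in>S. w i * R i) \<le> sum w S powr (1 - 1/p) * (\<Sum>i\<in>S. w i * R i powr p) powr (1/p)"
    by (rule weighted_sum_le_Hoelder[OF assms(1-4)])
  also have "\<dots> \<le> A powr (1 - 1/p) * (B powr p) powr (1/p)"
    using assms by (intro mult_mono powr_mono2) (auto intro!: sum_nonneg)
  also have "(B powr p) powr (1/p) = B"
    using assms by (simp add: powr_powr)
  finally show ?thesis .
qed

section \<open>McDiarmid's inequality for independent coordinates\<close>

lemma Hoeffdings_lemma_finite:
  fixes p u :: "'a::finite \<Rightarrow> real"
  assumes p_nonneg: "\<And>x. 0 \<le> p x" and p_sum: "(\<Sum>x\<in>UNIV. p x) = 1"
    and u: "\<And>x. a \<le> u x \<and> u x \<le> b" and mean: "(\<Sum>x\<in>UNIV. p x * u x) = 0" and l: "0 < l"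
  shows "(\<Sum>x\<in>UNIV. p x * exp (l * u x)) \<le> exp (l\<^sup>2 * (b - a)\<^sup>2 / 8)"
proof -
  define M where "M = embed_pmf p"
  have "(\<integral>\<^sup>+x. ennreal (p x) \<partial>count_space UNIV) = 1"
    by (simp add: nn_integral_count_space_finite p_nonneg p_sum)
  then have pmf_M: "pmf M x = p x" for x
    unfolding M_def using p_nonneg by (simp add: pmf_embed_pmf)
  interpret interval_bounded_random_variable "measure_pmf M" u a b
    by unfold_locales (auto simp: u)
  have "measure_pmf.expectation M u = 0"
    using integral_measure_pmf_real[of UNIV M u] mean by (simp add: pmf_M mult.commute)
  then have "(\<integral>\<^sup>+x. exp (l * u x) \<partial>measure_pmf M) \<le> ennreal (exp (l\<^sup>2 * (b - a)\<^sup>2 / 8))"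
    by (rule Hoeffdings_lemma_nn_integral_0[OF l])
  moreover have "(\<integral>\<^sup>+x. exp (l * u x) \<partial>measure_pmf M) = (\<Sum>x\<in>UNIV. ennreal (exp (l * u x)) * pmf M x)"
    by (rule nn_integral_measure_pmf_support) auto
  moreover have "\<dots> = ennreal (\<Sum>x\<in>UNIV. p x * exp (l * u x))"
    by (simp add: pmf_M p_nonneg ennreal_mult' mult.commute flip: sum_ennreal)
  ultimately show ?thesis
    by (simp add: ennreal_le_iff2)
qed

abbreviation paths :: "nat \<Rightarrow> (nat \<Rightarrow> 'a) set" where
  "paths m \<equiv> PiE {1..m} (\<lambda>_. UNIV)"

lemma sum_paths_Suc:
  fixes F :: "(nat \<Rightarrow> 'a::finite) \<Rightarrow> real"
  shows "(\<Sum>x\<in>paths (Suc m). F x) = (\<Sum>x\<in>paths m. \<Sum>v\<in>UNIV. F (x(Suc m := v)))"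
proof -
  have Suc_eq: "{1..Suc m} = insert (Suc m) {1..m}" by auto
  have "(\<Sum>x\<in>paths (Suc m). F x) = (\<Sum>(v, x)\<in>UNIV \<times> paths m. F (x(Suc m := v)))"
    unfolding Suc_eq PiE_insert_eq
    by (subst sum.reindex[OF inj_combinator]) (auto simp: o_def case_prod_unfold)
  also have "\<dots> = (\<Sum>x\<in>paths m. \<Sum>v\<in>UNIV. F (x(Suc m := v)))"
    by (simp add: sum.cartesian_product[symmetric] sum.swap[of _ UNIV])
  finally show ?thesis .
qed

lemma fun_upd_in_paths_Suc: "x \<in> paths m \<Longrightarrow> x(Suc m := v) \<in> paths (Suc m)"
  by (auto simp: PiE_def extensional_def)

definition indep_path_pmf :: "(nat \<Rightarrow> 'a \<Rightarrow> real) \<Rightarrow> nat \<Rightarrow> (nat \<Rightarrow> 'a) \<Rightarrow> real" where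
  "indep_path_pmf Pf m x = (\<Prod>i\<in>{1..m}. Pf i (x i))"

definition indep_mean ::
    "(nat \<Rightarrow> 'a::finite \<Rightarrow> real) \<Rightarrow> nat \<Rightarrow> ((nat \<Rightarrow> 'a) \<Rightarrow> real) \<Rightarrow> real" where
  "indep_mean Pf m g = (\<Sum>x\<in>paths m. indep_path_pmf Pf m x * g x)"

lemma indep_path_pmf_Suc:
  "indep_path_pmf Pf (Suc m) x = indep_path_pmf Pf m x * Pf (Suc m) (x (Suc m))"
proof -
  have "{1..Suc m} = insert (Suc m) {1..m}" by auto
  then show ?thesis by (simp add: indep_path_pmf_def mult.commute)
qed

lemma indep_path_pmf_upd: "indep_path_pmf Pf m (x(Suc m := v)) = indep_path_pmf Pf m x"
  unfolding indep_path_pmf_def by (intro prod.cong) auto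

lemma indep_path_pmf_nonneg: "(\<And>i x. 0 \<le> Pf i x) \<Longrightarrow> 0 \<le> indep_path_pmf Pf m x"
  unfolding indep_path_pmf_def by (simp add: prod_nonneg)

lemma indep_mean_Suc:
  "indep_mean Pf (Suc m) g = indep_mean Pf m (\<lambda>x. \<Sum>v\<in>UNIV. Pf (Suc m) v * g (x(Suc m := v)))"
  unfolding indep_mean_def sum_paths_Suc indep_path_pmf_Suc indep_path_pmf_upd
  by (simp add: sum_distrib_left mult.assoc)

lemma indep_mean_const:
  assumes "\<And>i. (\<Sum>x\<in>UNIV. Pf i x) = 1"
  shows "indep_mean Pf m (\<lambda>_. c) = c"
proof (induction m)
  case 0
  then show ?case by (simp add: indep_mean_def indep_path_pmf_def)
next
  case (Suc m)
  then show ?case by (simp add: indep_mean_Suc assms flip: sum_distrib_right)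
qed

lemma indep_mean_mult_right: "indep_mean Pf m (\<lambda>x. F x * c) = indep_mean Pf m F * c"
  by (simp add: indep_mean_def sum_distrib_right mult.assoc)

lemma indep_mean_mono:
  fixes Pf :: "nat \<Rightarrow> 'a::finite \<Rightarrow> real"
  assumes "\<And>i x. 0 \<le> Pf i x"
    and "\<And>x. x \<in> paths m \<Longrightarrow> 0 < indep_path_pmf Pf m x \<Longrightarrow> F x \<le> G x"
  shows "indep_mean Pf m F \<le> indep_mean Pf m G"
  unfolding indep_mean_def
proof (rule sum_mono)
  fix x :: "nat \<Rightarrow> 'a" assume "x \<in> paths m"
  with assms indep_path_pmf_nonneg[of Pf m x]
  show "indep_path_pmf Pf m x * F x \<le> indep_path_pmf Pf m x * G x"
    by (cases "indep_path_pmf Pf m x = 0") (auto intro: mult_left_mono)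
qed

lemma indep_mean_exp_bounded_differences:
  fixes Pf :: "nat \<Rightarrow> 'a::finite \<Rightarrow> real" and g :: "(nat \<Rightarrow> 'a) \<Rightarrow> real"
  assumes Pf_nonneg: "\<And>i x. 0 \<le> Pf i x" and Pf_sum: "\<And>i. (\<Sum>x\<in>UNIV. Pf i x) = 1"
    and l: "0 < l"
    and "\<And>x i v. x \<in> paths m \<Longrightarrow> i \<in> {1..m} \<Longrightarrow> \<bar>g x - g (x(i := v))\<bar> \<le> c"
  shows "indep_mean Pf m (\<lambda>x. exp (l * (g x - indep_mean Pf m g))) \<le> exp (l\<^sup>2 * real m * c\<^sup>2 / 8)"
  using assms(4)
proof (induction m arbitrary: g)
  case 0
  then show ?case by (simp add: indep_mean_def indep_path_pmf_def)
next
  case (Suc m)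
  \<comment> \<open>given the first m coordinates, g - h is centred with range at most c\<close>
  define h where "h x = (\<Sum>v\<in>UNIV. Pf (Suc m) v * g (x(Suc m := v)))" for x
  have bdd_h: "\<bar>h x - h (x(i := w))\<bar> \<le> c" if x: "x \<in> paths m" and i: "i \<in> {1..m}" for x i w
  proof -
    have "\<bar>h x - h (x(i := w))\<bar>
        = \<bar>\<Sum>v\<in>UNIV. Pf (Suc m) v * (g (x(Suc m := v)) - g ((x(Suc m := v))(i := w)))\<bar>"
      using i by (simp add: h_def right_diff_distrib sum_subtractf fun_upd_twist)
    also have "\<dots> \<le> (\<Sum>v\<in>UNIV. Pf (Suc m) v * c)"
    proof (intro order.trans[OF sum_abs] sum_mono)
      fix v
      have "\<bar>g (x(Suc m := v)) - g ((x(Suc m := v))(i := w))\<bar> \<le> c"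
        using i by (intro Suc.prems fun_upd_in_paths_Suc[OF x]) auto
      then show "\<bar>Pf (Suc m) v * (g (x(Suc m := v)) - g ((x(Suc m := v))(i := w)))\<bar> \<le> Pf (Suc m) v * c"
        using Pf_nonneg by (simp add: abs_mult mult_left_mono)
    qed
    also have "\<dots> = c"
      by (simp add: Pf_sum flip: sum_distrib_right)
    finally show ?thesis .
  qed
  have last_coord: "(\<Sum>v\<in>UNIV. Pf (Suc m) v * exp (l * (g (x(Suc m := v)) - h x))) \<le> exp (l\<^sup>2 * c\<^sup>2 / 8)"
    if x: "x \<in> paths m" for x
  proof -
    obtain v0 where v0: "\<And>v. g (x(Suc m := v0)) \<le> g (x(Suc m := v))"
      using ex_is_arg_min_if_finite[of UNIV "\<lambda>v. g (x(Suc m := v))"]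
      by (auto simp: is_arg_min_linorder)
    define a where "a = g (x(Suc m := v0)) - h x"
    have spread: "\<bar>g (x(Suc m := v)) - g ((x(Suc m := v))(Suc m := v0))\<bar> \<le> c" for v
      by (intro Suc.prems fun_upd_in_paths_Suc[OF x]) auto
    have "a \<le> g (x(Suc m := v)) - h x \<and> g (x(Suc m := v)) - h x \<le> a + c" for v
      using v0[of v] spread[of v] by (simp add: a_def abs_le_iff)
    moreover have "(\<Sum>v\<in>UNIV. Pf (Suc m) v * (g (x(Suc m := v)) - h x)) = 0"
      by (simp add: h_def right_diff_distrib sum_subtractf Pf_sum flip: sum_distrib_right)
    ultimately show ?thesis
      using Hoeffdings_lemma_finite[where p = "Pf (Suc m)" and u = "\<lambda>v. g (x(Suc m := v)) - h x"
          and a = a and b = "a + c", OF Pf_nonneg Pf_sum _ _ l]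
      by simp
  qed
  have "indep_mean Pf (Suc m) (\<lambda>y. exp (l * (g y - indep_mean Pf (Suc m) g)))
      = indep_mean Pf m (\<lambda>x. exp (l * (h x - indep_mean Pf m h)) *
          (\<Sum>v\<in>UNIV. Pf (Suc m) v * exp (l * (g (x(Suc m := v)) - h x))))"
    unfolding indep_mean_Suc[of Pf m] h_def[symmetric]
    by (simp add: sum_distrib_left algebra_simps flip: exp_add)
  also have "\<dots> \<le> indep_mean Pf m (\<lambda>x. exp (l * (h x - indep_mean Pf m h)) * exp (l\<^sup>2 * c\<^sup>2 / 8))"
    using last_coord by (intro indep_mean_mono Pf_nonneg mult_left_mono) auto
  also have "\<dots> \<le> exp (l\<^sup>2 * real m * c\<^sup>2 / 8) * exp (l\<^sup>2 * c\<^sup>2 / 8)"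
    unfolding indep_mean_mult_right using Suc.IH[OF bdd_h] by (intro mult_right_mono) auto
  also have "\<dots> = exp (l\<^sup>2 * real (Suc m) * c\<^sup>2 / 8)"
    by (simp add: algebra_simps add_divide_distrib flip: exp_add)
  finally show ?case .
qed

lemma indep_upper_tail_bounded_differences:
  fixes Pf :: "nat \<Rightarrow> 'a::finite \<Rightarrow> real" and g :: "(nat \<Rightarrow> 'a) \<Rightarrow> real"
  assumes Pf_nonneg: "\<And>i x. 0 \<le> Pf i x" and Pf_sum: "\<And>i. (\<Sum>x\<in>UNIV. Pf i x) = 1"
    and n: "0 < n" and t: "0 < t"
    and bdd: "\<And>x i v. x \<in> paths n \<Longrightarrow> i \<in> {1..n} \<Longrightarrow> \<bar>g x - g (x(i := v))\<bar> \<le> 1 / real n"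
  shows "(\<Sum>x\<in>{x\<in>paths n. t \<le> g x - indep_mean Pf n g}. indep_path_pmf Pf n x) \<le> exp (- 2 * real n * t\<^sup>2)"
proof -
  define l where "l = 4 * real n * t"
  define E where "E = indep_mean Pf n g"
  have l: "0 < l" using n t by (simp add: l_def)
  have pmf_nonneg: "0 \<le> indep_path_pmf Pf n x" for x
    by (intro indep_path_pmf_nonneg Pf_nonneg)
  have "(\<Sum>x\<in>{x\<in>paths n. t \<le> g x - E}. indep_path_pmf Pf n x)
      \<le> (\<Sum>x\<in>{x\<in>paths n. t \<le> g x - E}. indep_path_pmf Pf n x * exp (l * (g x - E) - l * t))"
  proof (intro sum_mono)
    fix x assume "x \<in> {x\<in>paths n. t \<le> g x - E}"
    then have "0 \<le> l * (g x - E - t)" using l by simp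
    then have "1 \<le> exp (l * (g x - E) - l * t)" by (simp add: algebra_simps)
    then show "indep_path_pmf Pf n x \<le> indep_path_pmf Pf n x * exp (l * (g x - E) - l * t)"
      using mult_left_mono[of 1 _ "indep_path_pmf Pf n x"] pmf_nonneg by simp
  qed
  also have "\<dots> \<le> (\<Sum>x\<in>paths n. indep_path_pmf Pf n x * exp (l * (g x - E) - l * t))"
    by (intro sum_mono2) (auto simp: finite_PiE intro!: mult_nonneg_nonneg pmf_nonneg)
  also have "\<dots> = indep_mean Pf n (\<lambda>x. exp (l * (g x - E))) * exp (- (l * t))"
    by (simp add: indep_mean_def sum_distrib_right mult.assoc flip: exp_add)
  also have "\<dots> \<le> exp (l\<^sup>2 * real n * (1 / real n)\<^sup>2 / 8) * exp (- (l * t))"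
    unfolding E_def by (intro mult_right_mono indep_mean_exp_bounded_differences Pf_nonneg Pf_sum l bdd) auto
  also have "\<dots> = exp (- 2 * real n * t\<^sup>2)"
    using n by (simp add: l_def power2_eq_square field_simps flip: exp_add)
  finally show ?thesis unfolding E_def .
qed

lemma McDiarmid_inequality:
  fixes Pf :: "nat \<Rightarrow> 'a::finite \<Rightarrow> real" and g :: "(nat \<Rightarrow> 'a) \<Rightarrow> real"
  assumes Pf_nonneg: "\<And>i x. 0 \<le> Pf i x" and Pf_sum: "\<And>i. (\<Sum>x\<in>UNIV. Pf i x) = 1"
    and n: "0 < n" and t: "0 < t"
    and bdd: "\<And>x i v. x \<in> paths n \<Longrightarrow> i \<in> {1..n} \<Longrightarrow> \<bar>g x - g (x(i := v))\<bar> \<le> 1 / real n"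
  shows "(\<Sum>x\<in>{x\<in>paths n. t \<le> \<bar>g x - indep_mean Pf n g\<bar>}. indep_path_pmf Pf n x)
           \<le> 2 * exp (- 2 * real n * t\<^sup>2)"
proof -
  define A where "A g = {x\<in>paths n. t \<le> g x - indep_mean Pf n g}" for g :: "(nat \<Rightarrow> 'a) \<Rightarrow> real"
  have fin: "finite (A g)" for g by (simp add: A_def finite_PiE)
  have "{x\<in>paths n. t \<le> \<bar>g x - indep_mean Pf n g\<bar>} = A g \<union> A (\<lambda>x. - g x)"
    by (auto simp: A_def indep_mean_def sum_negf)
  then have "(\<Sum>x\<in>{x\<in>paths n. t \<le> \<bar>g x - indep_mean Pf n g\<bar>}. indep_path_pmf Pf n x)
      \<le> (\<Sum>x\<in>A g. indep_path_pmf Pf n x) + (\<Sum>x\<in>A (\<lambda>x. - g x). indep_path_pmf Pf n x)"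
    using sum_Un[OF fin fin, of "indep_path_pmf Pf n"]
    by (simp add: sum_nonneg indep_path_pmf_nonneg Pf_nonneg)
  also have "\<dots> \<le> exp (- 2 * real n * t\<^sup>2) + exp (- 2 * real n * t\<^sup>2)"
    unfolding A_def using bdd
    by (intro add_mono indep_upper_tail_bounded_differences[OF Pf_nonneg Pf_sum n t])
      (auto simp: abs_minus_commute)
  finally show ?thesis by simp
qed

section \<open>L^p norms on a finite space\<close>

lemma Lp_norm_nonneg: "0 \<le> Lp_norm \<mu> p g"
  unfolding Lp_norm_def by simp

lemma Lp_norm_powr:
  assumes "\<And>x. 0 \<le> \<mu> x" and "p \<noteq> 0"
  shows "Lp_norm \<mu> p g powr p = (\<Sum>x\<in>UNIV. \<mu> x * \<bar>g x\<bar> powr p)"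
  using assms by (simp add: Lp_norm_def powr_powr sum_nonneg)

lemma abs_le_Lp_norm:
  assumes \<mu>_nonneg: "\<And>x. 0 \<le> \<mu> x" and "0 < \<mu> x" and "0 < p"
  shows "\<bar>g x\<bar> \<le> Lp_norm \<mu> p g * \<mu> x powr (- 1 / p)"
proof -
  define S where "S = (\<Sum>y\<in>UNIV. \<mu> y * \<bar>g y\<bar> powr p)"
  have "\<mu> x * \<bar>g x\<bar> powr p \<le> S"
    unfolding S_def by (rule member_le_sum) (use \<mu>_nonneg in auto)
  then have "\<bar>g x\<bar> powr p \<le> S / \<mu> x"
    using \<open>0 < \<mu> x\<close> by (simp add: le_divide_eq mult.commute)
  then have "(\<bar>g x\<bar> powr p) powr (1 / p) \<le> (S / \<mu> x) powr (1 / p)"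
    using \<open>0 < p\<close> by (intro powr_mono2) auto
  also have "(S / \<mu> x) powr (1 / p) = S powr (1 / p) / \<mu> x powr (1 / p)"
    using \<mu>_nonneg by (auto simp: S_def intro!: powr_divide sum_nonneg)
  also have "\<dots> = Lp_norm \<mu> p g * \<mu> x powr (- 1 / p)"
    by (simp add: Lp_norm_def S_def powr_minus divide_inverse)
  finally show ?thesis
    using \<open>0 < p\<close> by (simp add: powr_powr)
qed

lemma Lp_norm_le_bound:
  fixes \<mu> :: "'a::finite \<Rightarrow> real"
  assumes \<mu>_nonneg: "\<And>x. 0 \<le> \<mu> x" and \<mu>_sum: "(\<Sum>x\<in>UNIV. \<mu> x) = 1" and p: "0 < p"
    and h_le: "\<And>x. \<bar>h x\<bar> \<le> B"
  shows "Lp_norm \<mu> p h \<le> B"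
proof -
  have B: "0 \<le> B" using h_le[of undefined] by linarith
  have "(\<Sum>x\<in>UNIV. \<mu> x * \<bar>h x\<bar> powr p) \<le> (\<Sum>x\<in>UNIV. \<mu> x * B powr p)"
    using \<mu>_nonneg h_le p by (intro sum_mono mult_left_mono powr_mono2) auto
  also have "\<dots> = B powr p"
    by (simp add: \<mu>_sum flip: sum_distrib_right)
  finally have "Lp_norm \<mu> p h \<le> (B powr p) powr (1 / p)"
    unfolding Lp_norm_def using \<mu>_nonneg p by (intro powr_mono2) (auto intro!: sum_nonneg)
  also have "\<dots> = B"
    using B p by (simp add: powr_powr)
  finally show ?thesis .
qed

lemma Lp_norm_point_mass:
  fixes \<mu> :: "'a::finite \<Rightarrow> real"
  assumes "0 < \<mu> a" and "0 < p"
  shows "Lp_norm \<mu> p (\<lambda>x. if x = a then 1 / \<mu> a else 0) = \<mu> a powr (1 / p - 1)"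
proof -
  have "(\<Sum>x\<in>UNIV. \<mu> x * \<bar>if x = a then 1 / \<mu> a else 0\<bar> powr p)
      = (\<Sum>x\<in>UNIV. if x = a then \<mu> a * (1 / \<mu> a) powr p else 0)"
    using assms by (intro sum.cong) auto
  also have "\<dots> = \<mu> a * (1 / \<mu> a) powr p"
    by simp
  also have "\<dots> = \<mu> a powr (1 - p)"
    using assms by (simp add: powr_divide powr_diff)
  finally show ?thesis
    using assms by (simp add: Lp_norm_def powr_powr diff_divide_distrib)
qed

section \<open>Kernels and backward channels\<close>

lemma sum_pushforward:
  fixes P :: "'a::finite \<Rightarrow> real" and K :: "'a \<Rightarrow> 'b::finite \<Rightarrow> real"
  assumes "\<And>x. (\<Sum>y\<in>UNIV. K x y) = 1"
  shows "(\<Sum>y\<in>UNIV. \<Sum>x\<in>UNIV. P x * K x y) = (\<Sum>x\<in>UNIV. P x)"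
  by (subst sum.swap) (simp add: assms flip: sum_distrib_left)

lemma Lp_norm_apply_kernel_le:
  fixes P Q :: "'a::finite \<Rightarrow> real" and K :: "'a \<Rightarrow> 'a \<Rightarrow> real"
  assumes P_nonneg: "\<And>x. 0 \<le> P x" and K_nonneg: "\<And>x y. 0 \<le> K x y"
    and K_stoch: "\<And>x. (\<Sum>y\<in>UNIV. K x y) = 1"
    and Q_eq: "\<And>y. Q y = (\<Sum>x\<in>UNIV. P x * K x y)" and \<alpha>: "1 \<le> \<alpha>"
  shows "Lp_norm P \<alpha> (apply_kernel K g) \<le> Lp_norm Q \<alpha> g"
proof -
  have pointwise: "\<bar>apply_kernel K g x\<bar> powr \<alpha> \<le> (\<Sum>y\<in>UNIV. K x y * \<bar>g y\<bar> powr \<alpha>)" for x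
  proof -
    have "\<bar>apply_kernel K g x\<bar> \<le> (\<Sum>y\<in>UNIV. K x y * \<bar>g y\<bar>)"
      unfolding apply_kernel_def using K_nonneg by (intro order.trans[OF sum_abs]) (simp add: abs_mult)
    then have "\<bar>apply_kernel K g x\<bar> powr \<alpha> \<le> (\<Sum>y\<in>UNIV. K x y * \<bar>g y\<bar>) powr \<alpha>"
      using \<alpha> by (intro powr_mono2) auto
    also have "\<dots> \<le> (\<Sum>y\<in>UNIV. K x y * \<bar>g y\<bar> powr \<alpha>)"
      using K_nonneg K_stoch \<alpha> by (intro weighted_sum_powr_le) auto
    finally show ?thesis .
  qed
  have "(\<Sum>x\<in>UNIV. P x * \<bar>apply_kernel K g x\<bar> powr \<alpha>)
      \<le> (\<Sum>x\<in>UNIV. P x * (\<Sum>y\<in>UNIV. K x y * \<bar>g y\<bar> powr \<alpha>))"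
    using pointwise P_nonneg by (intro sum_mono mult_left_mono) auto
  also have "\<dots> = (\<Sum>y\<in>UNIV. Q y * \<bar>g y\<bar> powr \<alpha>)"
    unfolding Q_eq sum_distrib_left sum_distrib_right by (subst sum.swap) (simp add: mult_ac)
  finally show ?thesis
    unfolding Lp_norm_def using \<alpha> P_nonneg by (intro powr_mono2) (auto intro!: sum_nonneg)
qed

text \<open>The infimum of an empty set of reals is unspecified, so this needs the admissible set to be
  nonempty: it contains \<alpha>, because a stochastic kernel is a contraction of L^\<alpha>.\<close>
lemma hc_gamma_star_ge_1:
  fixes P Q :: "'a::finite \<Rightarrow> real" and K :: "'a \<Rightarrow> 'a \<Rightarrow> real"
  assumes P_nonneg: "\<And>x. 0 \<le> P x" and K_nonneg: "\<And>x y. 0 \<le> K x y"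
    and K_stoch: "\<And>x. (\<Sum>y\<in>UNIV. K x y) = 1"
    and Q_eq: "\<And>y. Q y = (\<Sum>x\<in>UNIV. P x * K x y)" and \<alpha>: "1 \<le> \<alpha>"
  shows "1 \<le> hc_gamma_star P Q K \<alpha>"
proof -
  have "op_norm (apply_kernel K) P \<alpha> Q \<alpha> \<le> 1"
    unfolding op_norm_def
  proof (rule cSUP_least)
    have "(\<lambda>_. 1) \<in> {g :: 'a \<Rightarrow> real. g \<noteq> (\<lambda>_. 0)}"
      by (simp add: fun_eq_iff)
    then show "{g :: 'a \<Rightarrow> real. g \<noteq> (\<lambda>_. 0)} \<noteq> {}"
      by blast
  next
    fix g
    show "Lp_norm P \<alpha> (apply_kernel K g) / Lp_norm Q \<alpha> g \<le> 1"
      using Lp_norm_apply_kernel_le[OF P_nonneg K_nonneg K_stoch Q_eq \<alpha>, of g] Lp_norm_nonneg[of Q \<alpha> g]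
      by (cases "Lp_norm Q \<alpha> g = 0") auto
  qed
  with \<alpha> have "{\<gamma>. 1 \<le> \<gamma> \<and> \<gamma> \<le> \<alpha> \<and> op_norm (apply_kernel K) P \<alpha> Q \<gamma> \<le> 1} \<noteq> {}"
    by blast
  then show ?thesis
    unfolding hc_gamma_star_def by (rule cInf_greatest) simp
qed

lemma apply_backward_kernel_point_mass:
  fixes P :: "'a::finite \<Rightarrow> real"
  assumes "0 < P a"
  shows "apply_kernel (backward_kernel P Q K) (\<lambda>x. if x = a then 1 / P a else 0) y = K a y / Q y"
  using assms
  by (simp add: apply_kernel_def backward_kernel_def if_distrib[of "\<lambda>z. _ * z"] sum.delta' cong: if_cong)

lemma abs_apply_backward_kernel_le:
  fixes P :: "'a::finite \<Rightarrow> real" and K :: "'a \<Rightarrow> 'b \<Rightarrow> real"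
  assumes P_nonneg: "\<And>x. 0 \<le> P x" and K_nonneg: "\<And>x y. 0 \<le> K x y"
    and Q_eq: "\<And>y. Q y = (\<Sum>x\<in>UNIV. P x * K x y)"
    and g_le: "\<And>x. 0 < P x \<Longrightarrow> \<bar>g x\<bar> \<le> B" and "0 \<le> B"
  shows "\<bar>apply_kernel (backward_kernel P Q K) g y\<bar> \<le> B"
proof -
  have Q_nonneg: "0 \<le> Q y"
    unfolding Q_eq using P_nonneg K_nonneg by (intro sum_nonneg mult_nonneg_nonneg)
  have w_nonneg: "0 \<le> K x y * P x / Q y" for x
    using P_nonneg K_nonneg Q_nonneg by simp
  have "\<bar>apply_kernel (backward_kernel P Q K) g y\<bar> \<le> (\<Sum>x\<in>UNIV. K x y * P x / Q y * \<bar>g x\<bar>)"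
    unfolding apply_kernel_def backward_kernel_def
    using w_nonneg by (intro order.trans[OF sum_abs] sum_mono) (simp only: abs_mult abs_of_nonneg)
  also have "\<dots> \<le> (\<Sum>x\<in>UNIV. K x y * P x / Q y * B)"
  proof (intro sum_mono)
    fix x
    show "K x y * P x / Q y * \<bar>g x\<bar> \<le> K x y * P x / Q y * B"
    proof (cases "P x = 0")
      case False
      with P_nonneg[of x] have "\<bar>g x\<bar> \<le> B" by (intro g_le) (simp add: less_le)
      then show ?thesis using w_nonneg by (rule mult_left_mono)
    qed simp
  qed
  also have "\<dots> = B * (\<Sum>x\<in>UNIV. P x * K x y) / Q y"
    by (simp add: sum_distrib_left sum_divide_distrib mult_ac)
  also have "\<dots> = B * (Q y / Q y)"
    by (simp add: Q_eq[of y, symmetric])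
  also have "\<dots> \<le> B"
    using \<open>0 \<le> B\<close> by (cases "Q y = 0") auto
  finally show ?thesis .
qed

lemma bdd_above_backward_kernel_ratio:
  fixes P :: "'a::finite \<Rightarrow> real" and K :: "'a \<Rightarrow> 'b::finite \<Rightarrow> real"
  assumes P_nonneg: "\<And>x. 0 \<le> P x" and P_sum: "(\<Sum>x\<in>UNIV. P x) = 1"
    and K_nonneg: "\<And>x y. 0 \<le> K x y" and K_stoch: "\<And>x. (\<Sum>y\<in>UNIV. K x y) = 1"
    and Q_eq: "\<And>y. Q y = (\<Sum>x\<in>UNIV. P x * K x y)" and \<alpha>: "0 < \<alpha>" and \<gamma>: "0 < \<gamma>"
  shows "bdd_above ((\<lambda>g. Lp_norm Q \<alpha> (apply_kernel (backward_kernel P Q K) g) / Lp_norm P \<gamma> g) ` G)"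
proof (rule bdd_aboveI2)
  define M where "M = (\<Sum>x\<in>UNIV. P x powr (- 1 / \<gamma>))"
  have M_ge: "P x powr (- 1 / \<gamma>) \<le> M" for x
    unfolding M_def by (rule member_le_sum) auto
  have M_nonneg: "0 \<le> M"
    unfolding M_def by (simp add: sum_nonneg)
  have Q_nonneg: "0 \<le> Q y" for y
    unfolding Q_eq using P_nonneg K_nonneg by (intro sum_nonneg mult_nonneg_nonneg)
  have Q_sum: "(\<Sum>y\<in>UNIV. Q y) = 1"
    by (simp add: Q_eq sum_pushforward K_stoch P_sum)
  fix g
  show "Lp_norm Q \<alpha> (apply_kernel (backward_kernel P Q K) g) / Lp_norm P \<gamma> g \<le> M"
  proof (cases "Lp_norm P \<gamma> g = 0")
    case True
    then show ?thesis using M_nonneg by simp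
  next
    case False
    then have norm_pos: "0 < Lp_norm P \<gamma> g"
      using Lp_norm_nonneg[of P \<gamma> g] by simp
    have "\<bar>g x\<bar> \<le> Lp_norm P \<gamma> g * M" if "0 < P x" for x
      using abs_le_Lp_norm[where \<mu> = P and g = g, OF P_nonneg that \<gamma>] M_ge[of x] norm_pos
      by (meson order.trans mult_left_mono less_imp_le)
    then have "Lp_norm Q \<alpha> (apply_kernel (backward_kernel P Q K) g) \<le> Lp_norm P \<gamma> g * M"
      using norm_pos M_nonneg
      by (intro Lp_norm_le_bound Q_nonneg Q_sum \<alpha> abs_apply_backward_kernel_le P_nonneg K_nonneg Q_eq) auto
    then show ?thesis
      using norm_pos by (simp add: divide_le_eq mult.commute)
  qed
qed

text \<open>The likelihood ratio is the backward channel applied to the point mass at a, normalised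
  in L^1(P); its L^\<gamma>(P) norm is P(a)^(1/\<gamma> - 1).\<close>
lemma Lp_norm_likelihood_ratio_le:
  fixes P :: "'a::finite \<Rightarrow> real" and K :: "'a \<Rightarrow> 'a \<Rightarrow> real"
  assumes P_nonneg: "\<And>x. 0 \<le> P x" and P_sum: "(\<Sum>x\<in>UNIV. P x) = 1"
    and K_nonneg: "\<And>x y. 0 \<le> K x y" and K_stoch: "\<And>x. (\<Sum>y\<in>UNIV. K x y) = 1"
    and Q_eq: "\<And>y. Q y = (\<Sum>x\<in>UNIV. P x * K x y)" and \<alpha>: "1 \<le> \<alpha>" and a: "0 < P a"
  shows "Lp_norm Q \<alpha> (\<lambda>y. K a y / Q y)
           \<le> bwd_norm_star P Q K \<alpha> * P a powr (1 / hc_gamma_star P Q K \<alpha> - 1)"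
proof -
  define \<gamma> where "\<gamma> = hc_gamma_star P Q K \<alpha>"
  define \<delta> where "\<delta> = (\<lambda>x. if x = a then 1 / P a else 0)"
  have \<gamma>: "1 \<le> \<gamma>"
    unfolding \<gamma>_def using P_nonneg K_nonneg K_stoch Q_eq \<alpha> by (rule hc_gamma_star_ge_1)
  have "\<delta> a \<noteq> 0" using a by (simp add: \<delta>_def)
  then have "\<delta> \<in> {g. g \<noteq> (\<lambda>_. 0)}" by auto
  then have "Lp_norm Q \<alpha> (apply_kernel (backward_kernel P Q K) \<delta>) / Lp_norm P \<gamma> \<delta> \<le> bwd_norm_star P Q K \<alpha>"
    unfolding bwd_norm_star_def op_norm_def \<gamma>_def[symmetric] using \<alpha> \<gamma>
    by (intro cSUP_upper bdd_above_backward_kernel_ratio P_nonneg P_sum K_nonneg K_stoch Q_eq) auto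
  moreover have "apply_kernel (backward_kernel P Q K) \<delta> = (\<lambda>y. K a y / Q y)"
    unfolding \<delta>_def using a by (simp add: apply_backward_kernel_point_mass fun_eq_iff)
  moreover have "Lp_norm P \<gamma> \<delta> = P a powr (1 / \<gamma> - 1)"
    unfolding \<delta>_def using a \<gamma> by (simp add: Lp_norm_point_mass)
  ultimately show ?thesis
    unfolding \<gamma>_def using a by (simp add: divide_le_eq)
qed

lemma Lp_norm_likelihood_ratio_pos:
  fixes P :: "'a::finite \<Rightarrow> real" and K :: "'a \<Rightarrow> 'b::finite \<Rightarrow> real"
  assumes P_nonneg: "\<And>x. 0 \<le> P x" and K_nonneg: "\<And>x y. 0 \<le> K x y"
    and K_stoch: "\<And>x. (\<Sum>y\<in>UNIV. K x y) = 1"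
    and Q_eq: "\<And>y. Q y = (\<Sum>x\<in>UNIV. P x * K x y)" and a: "0 < P a"
  shows "0 < Lp_norm Q \<alpha> (\<lambda>y. K a y / Q y)"
proof -
  obtain v where v: "0 < K a v"
  proof (rule ccontr)
    assume "\<not> thesis"
    with that have "(\<Sum>y\<in>UNIV. K a y) \<le> 0"
      by (intro sum_nonpos) (meson not_less)
    with K_stoch[of a] show False by simp
  qed
  have "P a * K a v \<le> Q v"
    unfolding Q_eq using P_nonneg K_nonneg by (intro member_le_sum[where f = "\<lambda>x. P x * K x v"]) auto
  with mult_pos_pos[OF a v] have "0 < Q v"
    by linarith
  with v have "0 < Q v * \<bar>K a v / Q v\<bar> powr \<alpha>"
    by simp
  also have "\<dots> \<le> (\<Sum>y\<in>UNIV. Q y * \<bar>K a y / Q y\<bar> powr \<alpha>)"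
    using P_nonneg K_nonneg by (intro member_le_sum[where f = "\<lambda>y. Q y * \<bar>K a y / Q y\<bar> powr \<alpha>"])
      (auto simp: Q_eq intro!: sum_nonneg mult_nonneg_nonneg)
  finally show ?thesis
    unfolding Lp_norm_def by simp
qed

lemma powr_le_exp_min_log_supp:
  fixes P :: "'a::finite \<Rightarrow> real"
  assumes a: "0 < P a" and \<gamma>: "1 \<le> \<gamma>"
  shows "P a powr (1 / \<gamma> - 1) \<le> exp (- 1 / holder_conj \<gamma> * min_log_supp P)"
proof -
  have "- 1 / holder_conj \<gamma> = 1 / \<gamma> - 1"
    using \<gamma> by (cases "\<gamma> = 1") (auto simp: holder_conj_def field_simps)
  moreover have "min_log_supp P \<le> ln (P a)"
    unfolding min_log_supp_def using a by (intro Min_le) auto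
  moreover have "1 / \<gamma> - 1 \<le> 0"
    using \<gamma> by (simp add: field_simps)
  ultimately show ?thesis
    using a by (simp add: powr_def mult_left_mono_neg)
qed

lemma Lp_norm_likelihood_ratio_le_exp:
  fixes P :: "'a::finite \<Rightarrow> real" and K :: "'a \<Rightarrow> 'a \<Rightarrow> real"
  assumes P_nonneg: "\<And>x. 0 \<le> P x" and P_sum: "(\<Sum>x\<in>UNIV. P x) = 1"
    and K_nonneg: "\<And>x y. 0 \<le> K x y" and K_stoch: "\<And>x. (\<Sum>y\<in>UNIV. K x y) = 1"
    and Q_eq: "\<And>y. Q y = (\<Sum>x\<in>UNIV. P x * K x y)" and \<alpha>: "1 \<le> \<alpha>" and a: "0 < P a"
  shows "Lp_norm Q \<alpha> (\<lambda>y. K a y / Q y)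
     \<le> exp (ln (bwd_norm_star P Q K \<alpha>) - 1 / holder_conj (hc_gamma_star P Q K \<alpha>) * min_log_supp P)"
proof -
  let ?N = "bwd_norm_star P Q K \<alpha>" and ?\<gamma> = "hc_gamma_star P Q K \<alpha>"
  have le: "Lp_norm Q \<alpha> (\<lambda>y. K a y / Q y) \<le> ?N * P a powr (1 / ?\<gamma> - 1)"
    using assms by (rule Lp_norm_likelihood_ratio_le)
  moreover have "0 < Lp_norm Q \<alpha> (\<lambda>y. K a y / Q y)"
    using P_nonneg K_nonneg K_stoch Q_eq a by (rule Lp_norm_likelihood_ratio_pos)
  ultimately have "0 < ?N * P a powr (1 / ?\<gamma> - 1)"
    by linarith
  then have N_pos: "0 < ?N"
    using a by (simp add: zero_less_mult_iff)
  note le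
  also have "?N * P a powr (1 / ?\<gamma> - 1) \<le> ?N * exp (- 1 / holder_conj ?\<gamma> * min_log_supp P)"
    using N_pos a P_nonneg K_nonneg K_stoch Q_eq \<alpha>
    by (intro mult_left_mono powr_le_exp_min_log_supp hc_gamma_star_ge_1) auto
  also have "\<dots> = exp (ln ?N - 1 / holder_conj ?\<gamma> * min_log_supp P)"
    using N_pos by (simp add: exp_diff exp_minus divide_inverse)
  finally show ?thesis .
qed

section \<open>Concentration for Markov chains\<close>

lemma mc_marg_Suc: "1 \<le> i \<Longrightarrow> mc_marg P1 K (Suc i) y = (\<Sum>x\<in>UNIV. mc_marg P1 K i x * K i x y)"
  by (cases i) auto

lemma mc_marg_nonneg:
  assumes "\<And>x. 0 \<le> P1 x" and "\<And>i x y. 0 \<le> K i x y"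
  shows "0 \<le> mc_marg P1 K i x"
  using assms by (induction P1 K i arbitrary: x rule: mc_marg.induct) (auto intro!: sum_nonneg)

lemma sum_mc_marg:
  assumes "(\<Sum>x\<in>UNIV. P1 x) = 1" and "\<And>i x. (\<Sum>y\<in>UNIV. K i x y) = 1"
  shows "(\<Sum>x\<in>UNIV. mc_marg P1 K i x) = 1"
  using assms by (induction P1 K i rule: mc_marg.induct) (simp_all add: sum_pushforward)

lemma mc_joint_Suc:
  "1 \<le> m \<Longrightarrow> mc_joint P1 K (Suc m) x = mc_joint P1 K m x * K m (x m) (x (Suc m))"
proof -
  assume "1 \<le> m"
  then have "{1..<Suc m} = insert m {1..<m}" by auto
  then show ?thesis by (simp add: mc_joint_def mult_ac)
qed

lemma mc_joint_le_mc_marg: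
  fixes P1 :: "'a::finite \<Rightarrow> real"
  assumes P1_nonneg: "\<And>x. 0 \<le> P1 x" and K_nonneg: "\<And>i x y. 0 \<le> K i x y" and "1 \<le> m"
  shows "mc_joint P1 K m x \<le> mc_marg P1 K m (x m)"
  using \<open>1 \<le> m\<close>
proof (induction m rule: nat_induct_at_least)
  case base
  then show ?case by (simp add: mc_joint_def)
next
  case (Suc m)
  have "mc_joint P1 K (Suc m) x \<le> mc_marg P1 K m (x m) * K m (x m) (x (Suc m))"
    unfolding mc_joint_Suc[OF Suc.hyps] using Suc.IH K_nonneg by (intro mult_right_mono)
  also have "\<dots> \<le> (\<Sum>z\<in>UNIV. mc_marg P1 K m z * K m z (x (Suc m)))"
    by (rule member_le_sum[where f = "\<lambda>z. mc_marg P1 K m z * K m z (x (Suc m))"])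
       (auto intro!: mult_nonneg_nonneg mc_marg_nonneg P1_nonneg K_nonneg)
  finally show ?case by (simp add: mc_marg_Suc[OF Suc.hyps])
qed

text \<open>Where a marginal vanishes the quotient is 0 by the convention x / 0 = 0; this is harmless,
  since the product of the marginals vanishes there as well.\<close>
definition mc_density ::
    "('a::finite \<Rightarrow> real) \<Rightarrow> (nat \<Rightarrow> 'a \<Rightarrow> 'a \<Rightarrow> real) \<Rightarrow> nat \<Rightarrow> (nat \<Rightarrow> 'a) \<Rightarrow> real" where
  "mc_density P1 K m x = (\<Prod>i\<in>{1..<m}. K i (x i) (x (Suc i)) / mc_marg P1 K (Suc i) (x (Suc i)))"

lemma mc_density_Suc:
  "1 \<le> m \<Longrightarrow> mc_density P1 K (Suc m) x
     = mc_density P1 K m x * (K m (x m) (x (Suc m)) / mc_marg P1 K (Suc m) (x (Suc m)))"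
proof -
  assume "1 \<le> m"
  then have "{1..<Suc m} = insert m {1..<m}" by auto
  then show ?thesis by (simp add: mc_density_def mult_ac)
qed

lemma mc_density_upd: "mc_density P1 K m (x(Suc m := v)) = mc_density P1 K m x"
  unfolding mc_density_def by (intro prod.cong) auto

lemma mc_density_nonneg:
  assumes "\<And>x. 0 \<le> P1 x" and "\<And>i x y. 0 \<le> K i x y"
  shows "0 \<le> mc_density P1 K m x"
  unfolding mc_density_def using assms by (auto intro!: prod_nonneg divide_nonneg_nonneg mc_marg_nonneg)

lemma mc_joint_eq_indep_path_pmf_mult_density:
  fixes P1 :: "'a::finite \<Rightarrow> real"
  assumes P1_nonneg: "\<And>x. 0 \<le> P1 x" and K_nonneg: "\<And>i x y. 0 \<le> K i x y" and "1 \<le> m"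
  shows "mc_joint P1 K m x = indep_path_pmf (mc_marg P1 K) m x * mc_density P1 K m x"
  using \<open>1 \<le> m\<close>
proof (induction m rule: nat_induct_at_least)
  case base
  then show ?case by (simp add: mc_joint_def indep_path_pmf_def mc_density_def)
next
  case (Suc m)
  show ?case
  proof (cases "mc_marg P1 K (Suc m) (x (Suc m)) = 0")
    case True
    have "0 \<le> mc_joint P1 K (Suc m) x"
      unfolding mc_joint_def by (intro mult_nonneg_nonneg prod_nonneg P1_nonneg K_nonneg)
    moreover have "mc_joint P1 K (Suc m) x \<le> mc_marg P1 K (Suc m) (x (Suc m))"
      by (intro mc_joint_le_mc_marg P1_nonneg K_nonneg) simp
    ultimately show ?thesis
      using True by (simp add: indep_path_pmf_Suc)
  next
    case False
    then show ?thesis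
      unfolding mc_joint_Suc[OF Suc.hyps] indep_path_pmf_Suc mc_density_Suc[OF Suc.hyps] Suc.IH
      by (simp add: field_simps)
  qed
qed

lemma indep_mean_mc_density_powr_le:
  fixes P1 :: "'a::finite \<Rightarrow> real"
  assumes P1_nonneg: "\<And>x. 0 \<le> P1 x" and P1_sum: "(\<Sum>x\<in>UNIV. P1 x) = 1"
    and K_nonneg: "\<And>i x y. 0 \<le> K i x y" and K_stoch: "\<And>i x. (\<Sum>y\<in>UNIV. K i x y) = 1"
    and \<alpha>: "0 < \<alpha>" and c_nonneg: "\<And>i. 0 \<le> c i"
    and ratio_le: "\<And>i a. 1 \<le> i \<Longrightarrow> 0 < mc_marg P1 K i a \<Longrightarrow>
       Lp_norm (mc_marg P1 K (Suc i)) \<alpha> (\<lambda>v. K i a v / mc_marg P1 K (Suc i) v) \<le> c i"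
    and "1 \<le> m"
  shows "indep_mean (mc_marg P1 K) m (\<lambda>x. mc_density P1 K m x powr \<alpha>) \<le> (\<Prod>i\<in>{1..<m}. c i) powr \<alpha>"
  using \<open>1 \<le> m\<close>
proof (induction m rule: nat_induct_at_least)
  case base
  have "\<And>i. (\<Sum>x\<in>UNIV. mc_marg P1 K i x) = 1" by (intro sum_mc_marg P1_sum K_stoch)
  then show ?case by (simp add: mc_density_def indep_mean_const)
next
  case (Suc m)
  let ?P = "mc_marg P1 K"
  have P_nonneg: "\<And>i x. 0 \<le> ?P i x" by (intro mc_marg_nonneg P1_nonneg K_nonneg)
  have R_nonneg: "0 \<le> mc_density P1 K m x" for x by (intro mc_density_nonneg P1_nonneg K_nonneg)
  have "indep_mean ?P (Suc m) (\<lambda>x. mc_density P1 K (Suc m) x powr \<alpha>)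
      = indep_mean ?P m (\<lambda>x. mc_density P1 K m x powr \<alpha> *
          Lp_norm (?P (Suc m)) \<alpha> (\<lambda>v. K m (x m) v / ?P (Suc m) v) powr \<alpha>)"
  proof -
    have "mc_density P1 K (Suc m) (x(Suc m := v)) powr \<alpha>
        = mc_density P1 K m x powr \<alpha> * (K m (x m) v / ?P (Suc m) v) powr \<alpha>" for x v
      unfolding mc_density_Suc[OF Suc.hyps] mc_density_upd
      using R_nonneg K_nonneg P_nonneg by (simp add: powr_mult del: times_divide_eq_right)
    then show ?thesis
      unfolding indep_mean_Suc Lp_norm_powr[OF P_nonneg less_imp_neq[OF \<alpha>, symmetric]]
      using K_nonneg P_nonneg by (simp add: sum_distrib_left mult_ac)
  qed
  also have "\<dots> \<le> indep_mean ?P m (\<lambda>x. mc_density P1 K m x powr \<alpha> * c m powr \<alpha>)"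
  proof (rule indep_mean_mono[OF P_nonneg])
    fix x assume pos: "0 < indep_path_pmf ?P m x"
    have "?P m (x m) \<noteq> 0"
    proof
      assume "?P m (x m) = 0"
      then have "indep_path_pmf ?P m x = 0"
        unfolding indep_path_pmf_def using Suc.hyps by (intro prod_zero bexI[of _ m]) auto
      with pos show False by simp
    qed
    then have "0 < ?P m (x m)" using P_nonneg[of m "x m"] by simp
    then show "mc_density P1 K m x powr \<alpha> * Lp_norm (?P (Suc m)) \<alpha> (\<lambda>v. K m (x m) v / ?P (Suc m) v) powr \<alpha>
        \<le> mc_density P1 K m x powr \<alpha> * c m powr \<alpha>"
      using ratio_le[OF Suc.hyps] \<alpha> by (intro mult_left_mono powr_mono2) (auto simp: Lp_norm_nonneg)
  qed
  also have "\<dots> \<le> (\<Prod>i\<in>{1..<m}. c i) powr \<alpha> * c m powr \<alpha>"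
    unfolding indep_mean_mult_right using Suc.IH by (intro mult_right_mono) auto
  also have "\<dots> = (\<Prod>i\<in>{1..<Suc m}. c i) powr \<alpha>"
  proof -
    have "{1..<Suc m} = insert m {1..<m}" using Suc.hyps by auto
    then show ?thesis by (simp add: powr_mult prod_nonneg c_nonneg mult.commute)
  qed
  finally show ?case .
qed

lemma dev_prob_eq_sum_mc_density:
  fixes P1 :: "'a::finite \<Rightarrow> real"
  assumes "\<And>x. 0 \<le> P1 x" and "\<And>i x y. 0 \<le> K i x y" and "0 < n"
  shows "dev_prob P1 K n f t = (\<Sum>x\<in>{x\<in>paths n. t \<le> \<bar>f x - indep_mean (mc_marg P1 K) n f\<bar>}.
           indep_path_pmf (mc_marg P1 K) n x * mc_density P1 K n x)"
proof -
  have "mc_joint P1 K n x = indep_path_pmf (mc_marg P1 K) n x * mc_density P1 K n x" for x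
    using assms by (intro mc_joint_eq_indep_path_pmf_mult_density) auto
  moreover have "prod_marg_mean P1 K n f = indep_mean (mc_marg P1 K) n f"
    by (simp add: prod_marg_mean_def indep_mean_def indep_path_pmf_def)
  ultimately show ?thesis
    by (simp add: dev_prob_def)
qed

lemma indep_mean_mc_density_powr_le_exp:
  fixes P1 :: "'a::finite \<Rightarrow> real" and K :: "nat \<Rightarrow> 'a \<Rightarrow> 'a \<Rightarrow> real"
  assumes P1_nonneg: "\<And>x. 0 \<le> P1 x" and P1_sum: "(\<Sum>x\<in>UNIV. P1 x) = 1"
    and K_nonneg: "\<And>i x y. 0 \<le> K i x y" and K_stoch: "\<And>i x. (\<Sum>y\<in>UNIV. K i x y) = 1"
    and \<alpha>: "1 \<le> \<alpha>" and n: "1 \<le> n"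
  shows "indep_mean (mc_marg P1 K) n (\<lambda>x. mc_density P1 K n x powr \<alpha>)
    \<le> exp (\<Sum>i\<in>{1..<n}. ln (bwd_norm_star (mc_marg P1 K i) (mc_marg P1 K (Suc i)) (K i) \<alpha>)
        - 1 / holder_conj (hc_gamma_star (mc_marg P1 K i) (mc_marg P1 K (Suc i)) (K i) \<alpha>)
            * min_log_supp (mc_marg P1 K i)) powr \<alpha>"
proof -
  let ?P = "mc_marg P1 K"
  have P_nonneg: "\<And>i x. 0 \<le> ?P i x" by (intro mc_marg_nonneg P1_nonneg K_nonneg)
  have P_sum: "\<And>i. (\<Sum>x\<in>UNIV. ?P i x) = 1" by (intro sum_mc_marg P1_sum K_stoch)
  have "indep_mean ?P n (\<lambda>x. mc_density P1 K n x powr \<alpha>)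
    \<le> (\<Prod>i\<in>{1..<n}. exp (ln (bwd_norm_star (?P i) (?P (Suc i)) (K i) \<alpha>)
        - 1 / holder_conj (hc_gamma_star (?P i) (?P (Suc i)) (K i) \<alpha>) * min_log_supp (?P i))) powr \<alpha>"
    using \<alpha> n
    by (intro indep_mean_mc_density_powr_le Lp_norm_likelihood_ratio_le_exp P1_nonneg P1_sum
        K_nonneg K_stoch P_nonneg P_sum mc_marg_Suc) auto
  then show ?thesis
    by (simp add: exp_sum)
qed

lemma markov_chain_concentration:
  fixes P1 :: "'a::finite \<Rightarrow> real" and K :: "nat \<Rightarrow> 'a \<Rightarrow> 'a \<Rightarrow> real"
    and f :: "(nat \<Rightarrow> 'a) \<Rightarrow> real"
  assumes P1_nonneg: "\<And>x. 0 \<le> P1 x" and P1_sum: "(\<Sum>x\<in>UNIV. P1 x) = 1"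
    and K_nonneg: "\<And>i x y. 0 \<le> K i x y" and K_stoch: "\<And>i x. (\<Sum>y\<in>UNIV. K i x y) = 1"
    and bdd: "\<And>x i v. x \<in> paths n \<Longrightarrow> i \<in> {1..n} \<Longrightarrow> \<bar>f x - f (x(i := v))\<bar> \<le> 1 / real n"
    and n: "0 < n" and \<alpha>: "1 < \<alpha>" and t: "0 < t"
  shows "dev_prob P1 K n f t \<le> 2 powr (1 / (\<alpha> / (\<alpha> - 1))) * exp (
       - 2 * real n * t\<^sup>2 / (\<alpha> / (\<alpha> - 1))
       + (\<Sum>i\<in>{1..<n}.
            ln (bwd_norm_star (mc_marg P1 K i) (mc_marg P1 K (Suc i)) (K i) \<alpha>)
            - 1 / holder_conj (hc_gamma_star (mc_marg P1 K i) (mc_marg P1 K (Suc i)) (K i) \<alpha>)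
                * min_log_supp (mc_marg P1 K i)))"
proof -
  let ?P = "mc_marg P1 K"
  define S where "S = (\<Sum>i\<in>{1..<n}. ln (bwd_norm_star (?P i) (?P (Suc i)) (K i) \<alpha>)
      - 1 / holder_conj (hc_gamma_star (?P i) (?P (Suc i)) (K i) \<alpha>) * min_log_supp (?P i))"
  define E where "E = {x\<in>paths n. t \<le> \<bar>f x - indep_mean ?P n f\<bar>}"
  have P_nonneg: "\<And>i x. 0 \<le> ?P i x" by (intro mc_marg_nonneg P1_nonneg K_nonneg)
  have pmf_nonneg: "0 \<le> indep_path_pmf ?P n x" for x by (intro indep_path_pmf_nonneg P_nonneg)
  have "dev_prob P1 K n f t = (\<Sum>x\<in>E. indep_path_pmf ?P n x * mc_density P1 K n x)"
    unfolding E_def using n by (intro dev_prob_eq_sum_mc_density P1_nonneg K_nonneg)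
  also have "\<dots> \<le> (2 * exp (- 2 * real n * t\<^sup>2)) powr (1 - 1 / \<alpha>) * exp S"
  proof (rule weighted_sum_le_Hoelder_bound)
    show "(\<Sum>x\<in>E. indep_path_pmf ?P n x) \<le> 2 * exp (- 2 * real n * t\<^sup>2)"
      unfolding E_def using bdd by (intro McDiarmid_inequality P_nonneg sum_mc_marg P1_sum K_stoch n t)
    have "(\<Sum>x\<in>E. indep_path_pmf ?P n x * mc_density P1 K n x powr \<alpha>)
        \<le> indep_mean ?P n (\<lambda>x. mc_density P1 K n x powr \<alpha>)"
      unfolding indep_mean_def E_def using pmf_nonneg by (intro sum_mono2) (auto simp: finite_PiE)
    also have "\<dots> \<le> exp S powr \<alpha>"
      unfolding S_def using \<alpha> n
      by (intro indep_mean_mc_density_powr_le_exp P1_nonneg P1_sum K_nonneg K_stoch) auto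
    finally show "(\<Sum>x\<in>E. indep_path_pmf ?P n x * mc_density P1 K n x powr \<alpha>) \<le> exp S powr \<alpha>" .
  qed (use \<alpha> pmf_nonneg in \<open>auto simp: E_def finite_PiE intro: mc_density_nonneg P1_nonneg K_nonneg\<close>)
  also have "\<dots> = 2 powr (1 / (\<alpha> / (\<alpha> - 1))) * exp (- 2 * real n * t\<^sup>2 / (\<alpha> / (\<alpha> - 1)) + S)"
  proof -
    have exponent: "1 - 1 / \<alpha> = 1 / (\<alpha> / (\<alpha> - 1))"
      using \<alpha> by (simp add: field_simps)
    have "(2 * exp (- 2 * real n * t\<^sup>2)) powr (1 / (\<alpha> / (\<alpha> - 1)))
        = 2 powr (1 / (\<alpha> / (\<alpha> - 1))) * exp (- 2 * real n * t\<^sup>2 / (\<alpha> / (\<alpha> - 1)))"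
      by (simp add: powr_mult exp_powr_real)
    then show ?thesis
      unfolding exponent by (simp only: exp_add mult.assoc)
  qed
  finally show ?thesis
    unfolding S_def .
qed

lemma le_mult_exp_sum_const_terms:
  fixes N \<gamma> m :: "'i \<Rightarrow> real"
  assumes "D \<le> C * exp (A + (\<Sum>i\<in>I. ln (N i) - 1 / holder_conj (\<gamma> i) * m i))"
    and "\<forall>i\<in>I. \<gamma> i = \<gamma>K \<and> N i = NK" and "card I = k"
  shows "D \<le> C * exp (A + real k * ln NK - 1 / holder_conj \<gamma>K * (\<Sum>i\<in>I. m i))"
proof -
  have "(\<Sum>i\<in>I. ln (N i) - 1 / holder_conj (\<gamma> i) * m i) = (\<Sum>i\<in>I. ln NK - 1 / holder_conj \<gamma>K * m i)"
    using assms(2) by (intro sum.cong) auto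
  also have "\<dots> = real k * ln NK - 1 / holder_conj \<gamma>K * (\<Sum>i\<in>I. m i)"
    using assms(3) by (simp add: sum_subtractf sum_distrib_left)
  finally show ?thesis
    using assms(1) by (simp add: add_diff_eq)
qed

lemma mult_exp_sum_le_card_Min:
  fixes m :: "'i \<Rightarrow> real"
  assumes "finite I" and "card I = k" and "1 \<le> \<gamma>" and "0 \<le> C"
  shows "C * exp (B - 1 / holder_conj \<gamma> * (\<Sum>i\<in>I. m i))
           \<le> C * exp (B - real k / holder_conj \<gamma> * Min (m ` I))"
proof -
  have "real k * Min (m ` I) \<le> (\<Sum>i\<in>I. m i)"
    using assms(1,2) by (auto intro: sum_bounded_below Min_le)
  moreover have "0 \<le> 1 / holder_conj \<gamma>"
    using assms(3) by (simp add: holder_conj_def)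
  ultimately have "1 / holder_conj \<gamma> * (real k * Min (m ` I)) \<le> 1 / holder_conj \<gamma> * (\<Sum>i\<in>I. m i)"
    by (rule mult_left_mono)
  with assms(4) show ?thesis
    by (intro mult_left_mono) auto
qed

theorem theorem2:
  fixes P1 :: "'a::finite \<Rightarrow> real"
    and K :: "nat \<Rightarrow> 'a \<Rightarrow> 'a \<Rightarrow> real"
    and f :: "(nat \<Rightarrow> 'a) \<Rightarrow> real"
    and n :: nat and \<alpha> t :: real
    and Kh :: "'a \<Rightarrow> 'a \<Rightarrow> real" and \<gamma>K NK :: real
  assumes n2: "n \<ge> 2"
    and P1_nonneg: "\<forall>x. 0 \<le> P1 x" and P1_sum: "(\<Sum>x\<in>UNIV. P1 x) = 1"
    and K_nonneg: "\<forall>i x y. 0 \<le> K i x y"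
    and K_stoch: "\<forall>i x. (\<Sum>y\<in>UNIV. K i x y) = 1"
    and bdd: "\<forall>x\<in>PiE {1..n} (\<lambda>_. UNIV). \<forall>i\<in>{1..n}. \<forall>v.
               \<bar>f x - f (x(i := v))\<bar> \<le> 1 / real n"
    and alpha: "\<alpha> > 1" and tpos: "t > 0"
  shows
   "dev_prob P1 K n f t \<le> 2 powr (1 / (\<alpha> / (\<alpha> - 1))) * exp (
       - 2 * real n * t\<^sup>2 / (\<alpha> / (\<alpha> - 1))
       + (\<Sum>i\<in>{1..<n}.
            ln (bwd_norm_star (mc_marg P1 K i) (mc_marg P1 K (Suc i)) (K i) \<alpha>)
            - 1 / holder_conj (hc_gamma_star (mc_marg P1 K i) (mc_marg P1 K (Suc i)) (K i) \<alpha>)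
                * min_log_supp (mc_marg P1 K i)))
    \<and> ((\<forall>i\<ge>1. K i = Kh)
        \<and> (\<forall>i\<in>{1..<n}. hc_gamma_star (mc_marg P1 K i) (mc_marg P1 K (Suc i)) Kh \<alpha> = \<gamma>K
                        \<and> bwd_norm_star (mc_marg P1 K i) (mc_marg P1 K (Suc i)) Kh \<alpha> = NK)
       \<longrightarrow>
         dev_prob P1 K n f t \<le> 2 powr (1 / (\<alpha> / (\<alpha> - 1))) * exp (
             - 2 * real n * t\<^sup>2 / (\<alpha> / (\<alpha> - 1))
             + real (n - 1) * ln NK
             - 1 / holder_conj \<gamma>K * (\<Sum>i\<in>{1..<n}. min_log_supp (mc_marg P1 K i)))
       \<and> 2 powr (1 / (\<alpha> / (\<alpha> - 1))) * exp (
             - 2 * real n * t\<^sup>2 / (\<alpha> / (\<alpha> - 1))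
             + real (n - 1) * ln NK
             - 1 / holder_conj \<gamma>K * (\<Sum>i\<in>{1..<n}. min_log_supp (mc_marg P1 K i)))
         \<le> 2 powr (1 / (\<alpha> / (\<alpha> - 1))) * exp (
             - 2 * real n * t\<^sup>2 / (\<alpha> / (\<alpha> - 1))
             + real (n - 1) * ln NK
             - real (n - 1) / holder_conj \<gamma>K
                 * Min ((\<lambda>i. min_log_supp (mc_marg P1 K i)) ` {1..<n})))"
proof -
  let ?P = "mc_marg P1 K"
  have n: "0 < n" using n2 by simp
  note bound = markov_chain_concentration[where K = K and f = f and \<alpha> = \<alpha>,
      OF P1_nonneg[rule_format] P1_sum K_nonneg[rule_format] K_stoch[rule_format] bdd[rule_format]
      n alpha tpos]
  have "1 \<le> hc_gamma_star (?P 1) (?P (Suc 1)) (K 1) \<alpha>"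
    using alpha P1_nonneg K_nonneg K_stoch
    by (intro hc_gamma_star_ge_1 mc_marg_nonneg mc_marg_Suc) auto
  with n2 show ?thesis
    by (intro conjI impI bound le_mult_exp_sum_const_terms[OF bound] mult_exp_sum_le_card_Min)
      (auto dest: bspec[where x = 1])
qed

end
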